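(* In the M/M/1 setting below, if $\mathbb{E}[W(q^S_s\Lambda)]=W(q^S_s\lambda)$, then $q^S_m\le q^S_s\le q^S_e$.
   Context: Setting: an M/M/1 queue with true (deterministic) Poisson arrival rate $\lambda>0$ and exponential service times with rate $\mu$, so the expected time in system at effective arrival rate $x\in[0,\mu)$ is $W(x)=1/(\mu-x)$. Each served customer receives reward $R$ and incurs waiting cost $C>0$ per unit time, with $R\ge C/\mu$. Customers' beliefs about the arrival rate are described by a non-degenerate nonnegative random variable $\Lambda$ whose support has minimum $\lambda_{\min}$ and maximum $\lambda_{\max}$, with $0\le\lambda_{\min}<\lambda<\lambda_{\max}<\mu$. For $q\in[0,1]$: $\mathrm{Rev}^S(q)=q\lambda\,\mathbb{E}[R-C\,W(q\Lambda)]$ and $\mathrm{SW}^S(q)=q\lambda\,(R-C\,W(q\lambda))$, both strictly concave on $[0,1]$; $q^S_m$ is the maximizer of $\mathrm{Rev}^S$ over $[0,1]$ and $q^S_s$ is the maximizer of $\mathrm{SW}^S$ over $[0,1]$. The individual (no-fee) equilibrium $q^S_e$: if $R-C\,\mathbb{E}[W(\Lambda)]\ge0$ then $q^S_e=1$; otherwise $q^S_e$ is the unique $q\in[0,1]$ with $C\,\mathbb{E}[W(q\Lambda)]=R$. *)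

theory Defs
  imports "HOL-Probability.Probability"
begin

text \<open>Expected time in system of an M/M/1 queue with service rate mu at effective arrival rate x.\<close>
definition W :: "real \<Rightarrow> real \<Rightarrow> real" where
  "W mu x = 1 / (mu - x)"

definition supp :: "real measure \<Rightarrow> real set" where
  "supp D = {x. \<forall>e>0. measure D (ball x e) > 0}"

text \<open>Expected revenue (sigma-independent, belief distribution D of Lambda).\<close>
definition RevS :: "real measure \<Rightarrow> real \<Rightarrow> real \<Rightarrow> real \<Rightarrow> real \<Rightarrow> real \<Rightarrow> real" where
  "RevS D lam mu R C q = q * lam * (\<integral>x. (R - C * W mu (q * x)) \<partial>D)"

definition SWS :: "real \<Rightarrow> real \<Rightarrow> real \<Rightarrow> real \<Rightarrow> real \<Rightarrow> real" where
  "SWS lam mu R C q = q * lam * (R - C * W mu (q * lam))"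

text \<open>q is the individual (no-fee) equilibrium joining probability.\<close>
definition is_equilibrium :: "real measure \<Rightarrow> real \<Rightarrow> real \<Rightarrow> real \<Rightarrow> real \<Rightarrow> bool" where
  "is_equilibrium D mu R C q \<longleftrightarrow>
     (R - C * (\<integral>x. W mu x \<partial>D) \<ge> 0 \<and> q = 1) \<or>
     (R - C * (\<integral>x. W mu x \<partial>D) < 0 \<and> q \<in> {0..1} \<and> C * (\<integral>x. W mu (q * x) \<partial>D) = R)"

end

theory Submission
  imports Defs
begin

text \<open>Write \<open>F q = E[W (q \<Lambda>)]\<close>. Since \<open>q\<^sub>s\<close> maximizes welfare, \<open>C W (q\<^sub>s \<lambda>) \<le> R\<close>, which by
  the hypothesis reads \<open>C F q\<^sub>s \<le> R\<close>; as \<open>F\<close> is strictly increasing and the equilibrium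
  solves \<open>C F q\<^sub>e = R\<close> (or is \<open>1\<close>), \<open>q\<^sub>s \<le> q\<^sub>e\<close>.
  For the revenue side, \<open>q \<mapsto> q W (q x)\<close> is convex with derivative \<open>\<mu> W (q x)\<^sup>2\<close>, so for
  \<open>q > q\<^sub>s\<close> the revenue gain over \<open>q\<^sub>s\<close> is less than \<open>\<lambda> (q - q\<^sub>s) (R - C \<mu> E[W (q\<^sub>s \<Lambda>)\<^sup>2])\<close>,
  and by Jensen at most \<open>\<lambda> (q - q\<^sub>s) (R - C \<mu> (F q\<^sub>s)\<^sup>2)\<close>. By the hypothesis again,
  \<open>\<lambda> (R - C \<mu> (F q\<^sub>s)\<^sup>2)\<close> is the marginal welfare at \<open>q\<^sub>s\<close>, which is \<open>\<le> 0\<close> unless \<open>q\<^sub>s = 1\<close>.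
  Hence no \<open>q > q\<^sub>s\<close> can maximize revenue.\<close>

lemma AE_in_supp:
  assumes "finite_measure D" and sets_D: "sets D = sets borel"
  shows "AE x in D. x \<in> supp D"
proof -
  define F where "F = {ball x e | x e. e > 0 \<and> measure D (ball x e) = 0}"
  have "\<And>S. S \<in> F \<Longrightarrow> open S" by (auto simp: F_def)
  then obtain F' where F': "F' \<subseteq> F" "countable F'" "\<Union>F' = \<Union>F"
    using Lindelof by metis
  have "(\<Union>S\<in>F'. S) \<in> null_sets D"
  proof (rule null_sets_UN')
    show "countable F'" by fact
    fix S assume "S \<in> F'"
    then obtain x e where "S = ball x e" "measure D (ball x e) = 0"
      using F'(1) by (auto simp: F_def)
    moreover have "ball x e \<in> sets D" using sets_D by simp
    ultimately show "S \<in> null_sets D"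
      by (simp add: null_sets_def finite_measure.emeasure_eq_measure[OF assms(1)])
  qed
  moreover have "{x \<in> space D. x \<notin> supp D} \<subseteq> (\<Union>S\<in>F'. S)"
  proof
    fix x assume "x \<in> {x \<in> space D. x \<notin> supp D}"
    then obtain e where e: "e > 0" "\<not> measure D (ball x e) > 0" by (auto simp: supp_def)
    then have "measure D (ball x e) = 0" using measure_nonneg[of D "ball x e"] by linarith
    with e(1) have "ball x e \<in> F" by (auto simp: F_def)
    moreover have "x \<in> ball x e" using e(1) by simp
    ultimately have "x \<in> \<Union>F" by blast
    then show "x \<in> (\<Union>S\<in>F'. S)" using F'(3) by simp
  qed
  ultimately show ?thesis by (rule AE_I')
qed

lemma emeasure_open_neq_0_if_supp:
  assumes "sets D = sets borel" "x \<in> supp D" "open U" "x \<in> U"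
  shows "emeasure D U \<noteq> 0"
proof
  assume U0: "emeasure D U = 0"
  obtain e where "e > 0" "ball x e \<subseteq> U" using assms(3,4) open_contains_ball by blast
  then have "emeasure D (ball x e) = 0"
    using U0 emeasure_mono[of "ball x e" U D] assms(1,3) by simp
  then have "measure D (ball x e) = 0" by (simp add: measure_def)
  with \<open>e > 0\<close> assms(2) show False by (auto simp: supp_def)
qed

lemma W_pos: "x < mu \<Longrightarrow> 0 < W mu x"
  by (simp add: W_def)

lemma W_strict_mono: "x < y \<Longrightarrow> y < mu \<Longrightarrow> W mu x < W mu y"
  by (simp add: W_def frac_less2)

lemma W_mono: "x \<le> y \<Longrightarrow> y < mu \<Longrightarrow> W mu x \<le> W mu y"
  by (cases "x = y") (simp_all add: less_imp_le W_strict_mono)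

text \<open>The map \<open>q \<mapsto> q * W mu (q * x)\<close> is convex with derivative \<open>mu * W mu (q * x) ^ 2\<close>;
  this is its gap above the tangent at \<open>p\<close>.\<close>

lemma scaled_W_tangent_gap:
  assumes "p * x < mu" "q * x < mu"
  shows "q * W mu (q * x) - p * W mu (p * x) - (q - p) * mu * W mu (p * x) ^ 2
       = mu * (q - p) ^ 2 * x * W mu (p * x) ^ 2 * W mu (q * x)"
proof -
  define a b where "a = mu - p * x" and "b = mu - q * x"
  have "a \<noteq> 0" "b \<noteq> 0" using assms by (auto simp: a_def b_def)
  then have "q / b - p / a - (q - p) * mu * (1 / a) ^ 2
      = (q * a ^ 2 - p * a * b - (q - p) * mu * b) / (a ^ 2 * b)"
    by (simp add: field_simps power2_eq_square)
  also have "q * a ^ 2 - p * a * b - (q - p) * mu * b = mu * (q - p) ^ 2 * x"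
    unfolding a_def b_def by (simp add: power2_eq_square algebra_simps)
  finally show ?thesis by (simp add: W_def a_def b_def power2_eq_square)
qed

lemma deriv_nonpos_at_right_max:
  fixes f :: "real \<Rightarrow> real"
  assumes "(f has_real_derivative d) (at x)" "x < b" "\<forall>y\<in>{x..b}. f y \<le> f x"
  shows "d \<le> 0"
proof (rule ccontr)
  assume "\<not> d \<le> 0"
  then obtain e where e: "e > 0" "\<forall>h>0. h < e \<longrightarrow> f x < f (x + h)"
    using DERIV_pos_inc_right[OF assms(1)] by auto
  define h where "h = min (e / 2) (b - x)"
  have "0 < h" "h < e" "x + h \<in> {x..b}" using e(1) assms(2) by (auto simp: h_def)
  then have "f x < f (x + h)" "f (x + h) \<le> f x" using e(2) assms(3) by auto
  then show False by simp
qed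

lemma SWS_has_real_derivative:
  assumes "q * lam < mu"
  shows "(SWS lam mu R C has_real_derivative lam * (R - C * mu * W mu (q * lam) ^ 2)) (at q)"
proof -
  have SWS_eq: "SWS lam mu R C = (\<lambda>q. q * lam * (R - C * (1 / (mu - q * lam))))"
    by (simp add: fun_eq_iff SWS_def W_def)
  show ?thesis unfolding SWS_eq W_def using assms
    by (auto intro!: derivative_eq_intros simp: field_simps power2_eq_square)
qed

lemma SWS_nonneg_imp_cost_le_reward:
  assumes "0 \<le> SWS lam mu R C q" "0 \<le> q" "0 < lam" "C / mu \<le> R"
  shows "C * W mu (q * lam) \<le> R"
proof (cases "q = 0")
  case True
  then show ?thesis using assms(4) by (simp add: W_def)
next
  case False
  then have "0 < q * lam" using assms(2,3) by simp
  with assms(1) show ?thesis by (simp add: SWS_def zero_le_mult_iff)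
qed

lemma SWS_max_marginal_nonpos:
  assumes "0 \<le> qs" "qs < 1" "0 < lam" "lam < mu"
    and "\<forall>q\<in>{0..1}. SWS lam mu R C q \<le> SWS lam mu R C qs"
  shows "R - C * mu * W mu (qs * lam) ^ 2 \<le> 0"
proof -
  have "qs * lam \<le> lam" using assms(1-3) by (intro mult_left_le_one_le) auto
  then have "qs * lam < mu" using assms(4) by linarith
  then have "lam * (R - C * mu * W mu (qs * lam) ^ 2) \<le> 0"
    using assms(1,2,5) by (intro deriv_nonpos_at_right_max[OF SWS_has_real_derivative]) auto
  with assms(3) show ?thesis by (simp add: mult_le_0_iff)
qed

text \<open>\<open>D\<close> is the law of the believed arrival rate. Of the non-degeneracy of the belief only
  a positive mass on \<open>{0<..}\<close> is needed: it makes \<open>mean_W\<close> strictly increasing.\<close>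

locale arrival_belief = prob_space D for D :: "real measure" +
  fixes mu lmax :: real
  assumes sets_eq_borel: "sets D = sets borel"
    and AE_bounds: "AE x in D. 0 \<le> x \<and> x \<le> lmax"
    and lmax_less_mu: "lmax < mu"
    and emeasure_positive_arrivals: "emeasure D {0<..} \<noteq> 0"
begin

definition mean_W :: "real \<Rightarrow> real" where
  "mean_W q = (\<integral>x. W mu (q * x) \<partial>D)"

lemma mu_pos: "0 < mu"
proof -
  have "AE x in D. 0 \<le> lmax" using AE_bounds by eventually_elim auto
  then show ?thesis using lmax_less_mu by simp
qed

lemma scaled_arrival_less_mu:
  assumes "q \<in> {0..1}" "0 \<le> x" "x \<le> lmax"
  shows "q * x < mu"
  using assms lmax_less_mu mult_left_le_one_le[of x q] by simp

lemma W_scaled_bounds: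
  assumes "q \<in> {0..1}" "0 \<le> x" "x \<le> lmax"
  shows "0 < W mu (q * x)" "W mu (q * x) \<le> W mu lmax"
proof -
  have "q * x \<le> lmax" using assms mult_left_le_one_le[of x q] by simp
  then show "0 < W mu (q * x)" "W mu (q * x) \<le> W mu lmax"
    using W_pos W_mono lmax_less_mu by auto
qed

lemma integrable_W_power:
  assumes "q \<in> {0..1}"
  shows "integrable D (\<lambda>x. W mu (q * x) ^ n)"
proof (rule integrable_const_bound[where B = "W mu lmax ^ n"])
  show "AE x in D. norm (W mu (q * x) ^ n) \<le> W mu lmax ^ n"
    using AE_bounds
  proof eventually_elim
    case (elim x)
    then show ?case using W_scaled_bounds[OF assms]
      by (simp add: norm_power abs_of_pos power_mono less_imp_le)
  qed
  have [measurable_cong]: "sets D = sets borel" by (rule sets_eq_borel)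
  show "(\<lambda>x. W mu (q * x) ^ n) \<in> borel_measurable D" unfolding W_def by measurable
qed

lemma integrable_W: "q \<in> {0..1} \<Longrightarrow> integrable D (\<lambda>x. W mu (q * x))"
  using integrable_W_power[of q 1] by simp

lemma mean_W_strict_mono: "strict_mono_on {0..1} mean_W"
proof (rule strict_mono_onI)
  fix p q :: real assume pq: "p \<in> {0..1}" "q \<in> {0..1}" "p < q"
  have le: "W mu (p * x) \<le> W mu (q * x)"
    and less: "0 < x \<Longrightarrow> W mu (p * x) < W mu (q * x)" if "0 \<le> x" "x \<le> lmax" for x
  proof -
    have "q * x < mu" using scaled_arrival_less_mu pq(2) that by blast
    moreover have "p * x \<le> q * x" using pq(3) that(1) by (simp add: mult_right_mono)
    moreover have "0 < x \<Longrightarrow> p * x < q * x" using pq(3) by simp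
    ultimately show "W mu (p * x) \<le> W mu (q * x)" "0 < x \<Longrightarrow> W mu (p * x) < W mu (q * x)"
      using W_mono W_strict_mono by blast+
  qed
  show "mean_W p < mean_W q"
    unfolding mean_W_def
  proof (rule integral_less_AE[where A = "{0<..}"])
    show "integrable D (\<lambda>x. W mu (p * x))" "integrable D (\<lambda>x. W mu (q * x))"
      using integrable_W pq by auto
    show "emeasure D {0<..} \<noteq> 0" by (rule emeasure_positive_arrivals)
    show "{0<..} \<in> sets D" by (simp add: sets_eq_borel)
    show "AE x in D. x \<in> {0<..} \<longrightarrow> W mu (p * x) \<noteq> W mu (q * x)"
      using AE_bounds
    proof eventually_elim
      case (elim x)
      then show ?case using less[of x] by auto
    qed
    show "AE x in D. W mu (p * x) \<le> W mu (q * x)"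
      using AE_bounds by eventually_elim (simp add: le)
  qed
qed

lemma RevS_eq: "q \<in> {0..1} \<Longrightarrow> RevS D lam mu R C q = q * lam * (R - C * mean_W q)"
  unfolding RevS_def mean_W_def using integrable_W by (simp add: prob_space)

lemma mean_W_square_le: "q \<in> {0..1} \<Longrightarrow> mean_W q ^ 2 \<le> (\<integral>x. W mu (q * x) ^ 2 \<partial>D)"
  using variance_eq[of "\<lambda>x. W mu (q * x)"] variance_positive[of "\<lambda>x. W mu (q * x)"]
    integrable_W integrable_W_power[of q 2]
  unfolding mean_W_def by simp

lemma scaled_mean_W_above_tangent:
  assumes pq: "p \<in> {0..1}" "q \<in> {0..1}" "p < q"
  shows "(q - p) * mu * (\<integral>x. W mu (p * x) ^ 2 \<partial>D) < q * mean_W q - p * mean_W p"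
proof -
  let ?tangent = "\<lambda>x. (q - p) * mu * W mu (p * x) ^ 2"
  let ?chord = "\<lambda>x. q * W mu (q * x) - p * W mu (p * x)"
  have gap: "?chord x - ?tangent x = mu * (q - p) ^ 2 * x * W mu (p * x) ^ 2 * W mu (q * x)"
    and W_pos: "0 < W mu (p * x)" "0 < W mu (q * x)"
    if "0 \<le> x" "x \<le> lmax" for x
  proof -
    show "0 < W mu (p * x)" "0 < W mu (q * x)" using W_scaled_bounds(1) pq(1,2) that by auto
    show "?chord x - ?tangent x = mu * (q - p) ^ 2 * x * W mu (p * x) ^ 2 * W mu (q * x)"
      using scaled_W_tangent_gap scaled_arrival_less_mu pq(1,2) that by simp
  qed
  have "(\<integral>x. ?tangent x \<partial>D) < (\<integral>x. ?chord x \<partial>D)"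
  proof (rule integral_less_AE[where A = "{0<..}"])
    show "integrable D ?tangent" "integrable D ?chord"
      using integrable_W integrable_W_power pq by auto
    show "emeasure D {0<..} \<noteq> 0" by (rule emeasure_positive_arrivals)
    show "{0<..} \<in> sets D" by (simp add: sets_eq_borel)
    show "AE x in D. x \<in> {0<..} \<longrightarrow> ?tangent x \<noteq> ?chord x"
      using AE_bounds
    proof eventually_elim
      case (elim x)
      then show ?case using gap[of x] W_pos[of x] mu_pos pq(3) by auto
    qed
    show "AE x in D. ?tangent x \<le> ?chord x"
      using AE_bounds
    proof eventually_elim
      case (elim x)
      then have "0 \<le> mu * (q - p) ^ 2 * x * W mu (p * x) ^ 2 * W mu (q * x)"
        using W_pos[of x] mu_pos by simp
      then show ?case using gap[of x] elim by simp
    qed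
  qed
  then show ?thesis
    using integrable_W integrable_W_power pq by (simp add: mean_W_def)
qed

lemma RevS_diff_less:
  assumes pq: "p \<in> {0..1}" "q \<in> {0..1}" "p < q" and "0 < lam" "0 < C"
  shows "RevS D lam mu R C q - RevS D lam mu R C p
    < lam * (q - p) * (R - C * mu * mean_W p ^ 2)"
proof -
  have "RevS D lam mu R C q - RevS D lam mu R C p
      = lam * ((q - p) * R - C * (q * mean_W q - p * mean_W p))"
    unfolding RevS_eq[OF pq(1)] RevS_eq[OF pq(2)] by (simp add: algebra_simps)
  also have "\<dots> < lam * ((q - p) * R - C * ((q - p) * mu * (\<integral>x. W mu (p * x) ^ 2 \<partial>D)))"
    using scaled_mean_W_above_tangent[OF pq] assms(4,5) by simp
  also have "\<dots> \<le> lam * ((q - p) * R - C * ((q - p) * mu * mean_W p ^ 2))"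
    using mean_W_square_le[OF pq(1)] assms(4,5) pq(3) mu_pos by (simp add: mult_left_mono)
  finally show ?thesis by (simp add: algebra_simps)
qed

lemma le_equilibrium:
  assumes "is_equilibrium D mu R C qe" "q \<in> {0..1}" "C * mean_W q \<le> R" "0 < C"
  shows "q \<le> qe"
  using assms(1) unfolding is_equilibrium_def
proof (elim disjE conjE)
  assume "qe = 1"
  then show ?thesis using assms(2) by simp
next
  assume "qe \<in> {0..1}" "C * (\<integral>x. W mu (qe * x) \<partial>D) = R"
  then have "C * mean_W q \<le> C * mean_W qe" using assms(3) by (simp add: mean_W_def)
  then have "mean_W q \<le> mean_W qe" using assms(4) by simp
  then show ?thesis
    using strict_mono_on_less_eq[OF mean_W_strict_mono assms(2) \<open>qe \<in> {0..1}\<close>] by simp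
qed

lemma RevS_maximizer_le:
  assumes "p \<in> {0..1}" "R - C * mu * mean_W p ^ 2 \<le> 0" "0 < lam" "0 < C"
    and "q \<in> {0..1}" "\<forall>q'\<in>{0..1}. RevS D lam mu R C q' \<le> RevS D lam mu R C q"
  shows "q \<le> p"
proof (rule ccontr)
  assume "\<not> q \<le> p"
  then have "p < q" by simp
  then have "lam * (q - p) * (R - C * mu * mean_W p ^ 2) \<le> 0"
    using assms(2,3) by (simp add: mult_nonneg_nonpos)
  then have "RevS D lam mu R C q < RevS D lam mu R C p"
    using RevS_diff_less[OF assms(1,5) \<open>p < q\<close> assms(3,4), where R = R] by linarith
  then show False using assms(1,6) by force
qed

end

lemma arrival_belief_if_supp_bounded:
  assumes "prob_space D" "sets D = sets borel" "0 \<le> lmin" "0 < lmax" "lmax < mu"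
    and "lmax \<in> supp D" "\<forall>x\<in>supp D. lmin \<le> x \<and> x \<le> lmax"
  shows "arrival_belief D mu lmax"
proof (intro arrival_belief.intro arrival_belief_axioms.intro)
  have "finite_measure D" using assms(1) by (simp add: prob_space_def)
  show "AE x in D. 0 \<le> x \<and> x \<le> lmax"
    using AE_in_supp[OF \<open>finite_measure D\<close> assms(2)] by eventually_elim (use assms(3,7) in force)
  show "emeasure D {0<..} \<noteq> 0"
    using emeasure_open_neq_0_if_supp[OF assms(2,6)] assms(4) by simp
qed (use assms in auto)

theorem theorem1:
  fixes D :: "real measure" and lam mu R C lmin lmax qm qs qe :: real
  assumes D_prob: "prob_space D" and D_sets: "sets D = sets borel"
    and lam_pos: "lam > 0" and C_pos: "C > 0" and R_ge: "R \<ge> C / mu"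
    and lmin_nonneg: "0 \<le> lmin" and ord: "lmin < lam" "lam < lmax" "lmax < mu"
    and lmin_supp: "lmin \<in> supp D" and lmax_supp: "lmax \<in> supp D"
    and supp_bounds: "\<forall>x\<in>supp D. lmin \<le> x \<and> x \<le> lmax"
    and qm_max: "qm \<in> {0..1}" "\<forall>q\<in>{0..1}. RevS D lam mu R C q \<le> RevS D lam mu R C qm"
    and qs_max: "qs \<in> {0..1}" "\<forall>q\<in>{0..1}. SWS lam mu R C q \<le> SWS lam mu R C qs"
    and qe_eq: "is_equilibrium D mu R C qe"
    and hyp: "(\<integral>x. W mu (qs * x) \<partial>D) = W mu (qs * lam)"
  shows "qm \<le> qs \<and> qs \<le> qe"
proof -
  have "0 < lmax" using lmin_nonneg ord by linarith
  then interpret arrival_belief D mu lmax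
    using arrival_belief_if_supp_bounded D_prob D_sets lmin_nonneg ord(3) lmax_supp supp_bounds
    by blast
  have "0 \<le> SWS lam mu R C qs" using qs_max(2)[rule_format, of 0] by (simp add: SWS_def)
  then have cost_le_reward: "C * mean_W qs \<le> R"
    using SWS_nonneg_imp_cost_le_reward qs_max(1) lam_pos R_ge hyp by (simp add: mean_W_def)
  have "qm \<le> qs"
  proof (cases "qs = 1")
    case True
    then show ?thesis using qm_max(1) by simp
  next
    case False
    then have "R - C * mu * mean_W qs ^ 2 \<le> 0"
      using SWS_max_marginal_nonpos[OF _ _ lam_pos _ qs_max(2)] qs_max(1) ord hyp
      by (simp add: mean_W_def)
    then show ?thesis using RevS_maximizer_le qs_max(1) lam_pos C_pos qm_max by blast
  qed
  moreover have "qs \<le> qe" using le_equilibrium[OF qe_eq qs_max(1) cost_le_reward C_pos] .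
  ultimately show ?thesis by simp
qed

end
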